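(* Let $m,q_1,\dots,q_m\in\mathbb N$ and let $\mathfrak H$ be a real separable Hilbert space with an isonormal Gaussian process. For $i=1,\dots,m$ let $G^{(i)}$ be a compact group with (left) Haar measure $\mu^{(i)}$, $G=G^{(1)}\times\cdots\times G^{(m)}$, $\mu=\mu^{(1)}\times\cdots\times\mu^{(m)}$. For $n\in\mathbb N$, $j\in\mathbb J_n=\{1,\dots,n\}$, let $e^{(i)}_{n,j}=e^{(i)}_j:G^{(i)}\to\mathfrak H^{\tilde\otimes q_i}$ and, for $(j_1,\dots,j_m)\in\mathbb J_n^m$ and $\mathbb x=(x^{(1)},\dots,x^{(m)})\in G$, let $A_n(j_1,\dots,j_m;\mathbb x)$ be random variables, such that $(\omega,\mathbb x)\mapsto A_n(j_1,\dots,j_m;\mathbb x)$ and $(\omega,x^{(i)})\mapsto I_{q_i}(e^{(i)}_j(x^{(i)}))$ are measurable and $\int_G|A_n(j_1,\dots,j_m;\mathbb x)\prod_{i=1}^mI_{q_i}(e^{(i)}_{j_i}(x^{(i)}))|\mu(d\mathbb x)<\infty$ a.s. Set $\mathbb H_n=\int_G\sum_{j_1,\dots,j_m=1}^nA_n(j_1,\dots,j_m;\mathbb x)\prod_{i=1}^mI_{q_i}(e^{(i)}_{j_i}(x^{(i)}))\,\mu(d\mathbb x)$. Suppose the localization condition: for every $i$ and $j\in\mathbb J_n$ there are $g^{(i)}_{n,j}\in G^{(i)}$ and a measurable set $\chi^{(i)}_n\subset G^{(i)}$ with $e^{(i)}_{n,j}(x)=e^{(i)}_{n,j}(x)1_{\chi^{(i)}_n}(g^{(i)}_{n,j}x)$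 for all $x\in G^{(i)}$. Define $$\mathring{\mathbb H}_n(\mathbb x)=\sum_{j_1,\dots,j_m=1}^nA_n\big(j_1,\dots,j_m;((g^{(i)}_{n,j_i})^{-1}x^{(i)})_{i=1}^m\big)\prod_{i=1}^mI_{q_i}\big(e^{(i)}_{j_i}((g^{(i)}_{n,j_i})^{-1}x^{(i)})\big).$$ Then $\mathbb H_n=\int_G\mathring{\mathbb H}_n(\mathbb x)\prod_{i=1}^m1_{\chi^{(i)}_n}(x^{(i)})\,\mu(d\mathbb x)$ and, for every $p\ge1$, $$\|\mathbb H_n\|_p\le\sup_{\mathbb x\in G}\|\mathring{\mathbb H}_n(\mathbb x)\|_p\;\mu\Big(\prod_{i=1}^m\chi^{(i)}_n\Big).$$
   Context: $I_q$ denotes the $q$-fold multiple Wiener integral and $\mathfrak H^{\tilde\otimes q}$ the symmetric $q$-fold tensor power of $\mathfrak H$; $gx$ denotes the group product (left translation by $g$). *)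

theory Defs
  imports "HOL-Probability.Probability" "HOL-Algebra.Group"
begin

definition borel_of_top :: "'a topology \<Rightarrow> 'a measure" where
  "borel_of_top T = sigma (topspace T) {U. openin T U}"

definition compact_topological_group :: "('g, 'b) monoid_scheme \<Rightarrow> 'g topology \<Rightarrow> bool" where
  "compact_topological_group G T \<longleftrightarrow>
     group G \<and> topspace T = carrier G \<and> compact_space T \<and> Hausdorff_space T \<and>
     continuous_map (prod_topology T T) T (\<lambda>(x, y). x \<otimes>\<^bsub>G\<^esub> y) \<and>
     continuous_map T T (\<lambda>x. inv\<^bsub>G\<^esub> x)"

definition left_haar_measure :: "('g, 'b) monoid_scheme \<Rightarrow> 'g topology \<Rightarrow> 'g measure \<Rightarrow> bool" where
  "left_haar_measure G T \<mu> \<longleftrightarrow>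
     compact_topological_group G T \<and>
     space \<mu> = carrier G \<and> sets \<mu> = sets (borel_of_top T) \<and>
     0 < emeasure \<mu> (carrier G) \<and> emeasure \<mu> (carrier G) < \<infinity> \<and>
     (\<forall>A\<in>sets \<mu>. emeasure \<mu> A = (INF U\<in>{U. openin T U \<and> A \<subseteq> U}. emeasure \<mu> U)) \<and>
     (\<forall>U. openin T U \<longrightarrow> emeasure \<mu> U = (SUP K\<in>{K. compactin T K \<and> K \<subseteq> U}. emeasure \<mu> K)) \<and>
     (\<forall>g\<in>carrier G. \<forall>A\<in>sets \<mu>. emeasure \<mu> ((\<lambda>x. g \<otimes>\<^bsub>G\<^esub> x) ` A) = emeasure \<mu> A)"

definition lp_norm :: "'w measure \<Rightarrow> real \<Rightarrow> ('w \<Rightarrow> real) \<Rightarrow> ennreal" where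
  "lp_norm M p X =
     (let E = (\<integral>\<^sup>+ \<omega>. ennreal (\<bar>X \<omega>\<bar> powr p) \<partial>M)
      in if E = \<infinity> then \<infinity> else ennreal (enn2real E powr (1 / p)))"

end

theory Submission
  imports Defs
begin

text \<open>Left invariance of each \<open>\<mu> i\<close> makes the product measure invariant under the
  coordinatewise translation \<open>x \<mapsto> (inv (g i n (js i)) \<otimes> x i)\<^sub>i\<close>; substituting it in the summand
  indexed by \<open>js\<close> turns \<open>HH\<close> into the integral of \<open>Hring\<close>. By the localization condition,
  \<open>Hring x\<close> vanishes as soon as some \<open>x i \<notin> chi i n\<close>, so \<open>HH\<close> is an integral over the box
  \<open>S = (\<Pi>\<^sub>E i<m. chi i n)\<close>. Jensen's inequality on \<open>S\<close> gives
  \<open>|HH| powr p \<le> \<mu>(S) powr (p - 1) * \<integral>\<^sub>S |Hring x| powr p\<close>, and taking expectations and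
  exchanging the integrals (Tonelli) bounds \<open>E |HH| powr p\<close> by \<open>(\<mu>(S) * sup\<^sub>x \<parallel>Hring x\<parallel>\<^sub>p) powr p\<close>.\<close>

lemma continuous_map_measurable_borel_of_top:
  assumes "continuous_map S T f"
  shows "f \<in> borel_of_top S \<rightarrow>\<^sub>M borel_of_top T"
  unfolding borel_of_top_def
proof (rule measurable_measure_of)
  show "{U. openin T U} \<subseteq> Pow (topspace T)"
    by (auto dest: openin_subset)
  show "f \<in> space (sigma (topspace S) {U. openin S U}) \<rightarrow> topspace T"
    using assms by (auto simp: space_measure_of_conv continuous_map_def dest: openin_subset)
  fix U assume "U \<in> {U. openin T U}"
  then have "openin S {x \<in> topspace S. f x \<in> U}"
    using assms by (auto intro: openin_continuous_map_preimage)
  moreover have "f -` U \<inter> space (sigma (topspace S) {U. openin S U}) = {x \<in> topspace S. f x \<in> U}"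
    by (auto simp: space_measure_of_conv dest: openin_subset)
  ultimately show "f -` U \<inter> space (sigma (topspace S) {U. openin S U}) \<in> sets (sigma (topspace S) {U. openin S U})"
    by (auto simp: sets_measure_of_conv intro: sigma_sets.Basic dest: openin_subset)
qed

lemma left_haar_measure_compact_topological_group:
  "left_haar_measure G T \<mu> \<Longrightarrow> compact_topological_group G T"
  unfolding left_haar_measure_def by (elim conjE)

lemma left_haar_measure_group: "left_haar_measure G T \<mu> \<Longrightarrow> group G"
  unfolding left_haar_measure_def compact_topological_group_def by (elim conjE)

lemma left_haar_measure_space: "left_haar_measure G T \<mu> \<Longrightarrow> space \<mu> = carrier G"
  unfolding left_haar_measure_def by (elim conjE)

lemma left_haar_measure_sets: "left_haar_measure G T \<mu> \<Longrightarrow> sets \<mu> = sets (borel_of_top T)"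
  unfolding left_haar_measure_def by (elim conjE)

lemma left_haar_measure_invariant:
  "left_haar_measure G T \<mu> \<Longrightarrow> g \<in> carrier G \<Longrightarrow> A \<in> sets \<mu> \<Longrightarrow>
    emeasure \<mu> ((\<lambda>x. g \<otimes>\<^bsub>G\<^esub> x) ` A) = emeasure \<mu> A"
  unfolding left_haar_measure_def by (elim conjE) blast

lemma left_haar_measure_finite_measure:
  assumes "left_haar_measure G T \<mu>"
  shows "finite_measure \<mu>"
proof (rule finite_measureI)
  have "emeasure \<mu> (carrier G) < \<infinity>"
    using assms unfolding left_haar_measure_def by (elim conjE)
  then show "emeasure \<mu> (space \<mu>) \<noteq> \<infinity>"
    using left_haar_measure_space[OF assms] by simp
qed

lemma left_haar_measure_translation_measurable:
  assumes haar: "left_haar_measure G T \<mu>" and h: "h \<in> carrier G"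
  shows "(\<lambda>x. h \<otimes>\<^bsub>G\<^esub> x) \<in> \<mu> \<rightarrow>\<^sub>M \<mu>"
proof -
  note top_group =
    left_haar_measure_compact_topological_group[OF haar, unfolded compact_topological_group_def]
  have T: "topspace T = carrier G"
    using top_group by (elim conjE)
  have mult: "continuous_map (prod_topology T T) T (\<lambda>(x, y). x \<otimes>\<^bsub>G\<^esub> y)"
    using top_group by (elim conjE)
  have "continuous_map T (prod_topology T T) (\<lambda>x. (h, x))"
    using h T by (auto simp: continuous_map_pairwise o_def)
  from continuous_map_compose[OF this mult]
  have "continuous_map T T (\<lambda>x. h \<otimes>\<^bsub>G\<^esub> x)"
    by (simp add: o_def)
  then show ?thesis
    using left_haar_measure_sets[OF haar] continuous_map_measurable_borel_of_top measurable_cong_sets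
    by blast
qed

lemma left_haar_measure_distr_translation:
  assumes haar: "left_haar_measure G T \<mu>" and h: "h \<in> carrier G"
  shows "distr \<mu> \<mu> (\<lambda>x. h \<otimes>\<^bsub>G\<^esub> x) = \<mu>"
proof (rule measure_eqI)
  interpret group G
    using haar by (rule left_haar_measure_group)
  note space = left_haar_measure_space[OF haar]
  fix A assume "A \<in> sets (distr \<mu> \<mu> (\<lambda>x. h \<otimes>\<^bsub>G\<^esub> x))"
  then have A: "A \<in> sets \<mu>" by simp
  then have "A \<subseteq> carrier G"
    using sets.sets_into_space space by blast
  then have "(\<lambda>x. h \<otimes>\<^bsub>G\<^esub> x) -` A \<inter> space \<mu> = (\<lambda>x. inv\<^bsub>G\<^esub> h \<otimes>\<^bsub>G\<^esub> x) ` A"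
    using h space by (force simp: m_assoc[symmetric] intro: image_eqI[of _ _ "h \<otimes>\<^bsub>G\<^esub> x" for x])
  then show "emeasure (distr \<mu> \<mu> (\<lambda>x. h \<otimes>\<^bsub>G\<^esub> x)) A = emeasure \<mu> A"
    using A h left_haar_measure_invariant[OF haar, of "inv\<^bsub>G\<^esub> h" A]
    by (simp add: emeasure_distr left_haar_measure_translation_measurable[OF haar h])
qed simp

text \<open>\<open>PiM I M\<close> depends on \<open>M\<close> only on \<open>I\<close>, but \<open>product_sigma_finite\<close> constrains every
  index; the factors outside \<open>I\<close> are therefore replaced by a trivial measure.\<close>

lemma product_sigma_finite_restrict:
  assumes "\<And>i. i \<in> I \<Longrightarrow> sigma_finite_measure (M i)"
  shows "product_sigma_finite (\<lambda>i. if i \<in> I then M i else count_space {})"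
  using assms by (auto simp: product_sigma_finite_def intro: finite_measure.sigma_finite_measure
      finite_measure_count_space)

lemma finite_measure_PiM_finite:
  assumes "finite I" and finite: "\<And>i. i \<in> I \<Longrightarrow> finite_measure (M i)"
  shows "finite_measure (PiM I M)"
proof (rule finite_measureI)
  let ?N = "\<lambda>i. if i \<in> I then M i else count_space {}"
  interpret product_sigma_finite ?N
    using finite by (intro product_sigma_finite_restrict finite_measure.sigma_finite_measure)
  have PiM_eq: "PiM I M = PiM I ?N"
    by (rule PiM_cong) auto
  have "emeasure (PiM I ?N) (space (PiM I ?N)) = (\<Prod>i\<in>I. emeasure (?N i) (space (?N i)))"
    unfolding space_PiM using \<open>finite I\<close> by (intro emeasure_PiM) auto
  also have "\<dots> \<noteq> \<infinity>"
    using finite by (auto simp: ennreal_prod_eq_top finite_measure.emeasure_finite)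
  finally show "emeasure (PiM I M) (space (PiM I M)) \<noteq> \<infinity>"
    unfolding PiM_eq .
qed

lemma distr_PiM_restrict_measure_preserving:
  assumes "finite I" and finite: "\<And>i. i \<in> I \<Longrightarrow> finite_measure (M i)"
    and f_meas: "\<And>i. i \<in> I \<Longrightarrow> f i \<in> M i \<rightarrow>\<^sub>M M i"
    and f_distr: "\<And>i. i \<in> I \<Longrightarrow> distr (M i) (M i) (f i) = M i"
  shows "distr (PiM I M) (PiM I M) (\<lambda>x. restrict (\<lambda>i. f i (x i)) I) = PiM I M"
proof -
  let ?N = "\<lambda>i. if i \<in> I then M i else count_space {}"
  let ?f = "\<lambda>x. restrict (\<lambda>i. f i (x i)) I"
  interpret product_sigma_finite ?N
    using finite by (intro product_sigma_finite_restrict finite_measure.sigma_finite_measure)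
  have PiM_eq: "PiM I M = PiM I ?N"
    by (rule PiM_cong) auto
  have f_meas': "f i \<in> ?N i \<rightarrow>\<^sub>M ?N i" if "i \<in> I" for i
    using f_meas that by simp
  have meas: "?f \<in> PiM I ?N \<rightarrow>\<^sub>M PiM I ?N"
    using f_meas' by (intro measurable_restrict measurable_compose[OF measurable_component_singleton]) auto
  have "distr (PiM I ?N) (PiM I ?N) ?f = PiM I ?N"
  proof (rule PiM_eqI[OF \<open>finite I\<close>])
    fix A assume A: "\<And>i. i \<in> I \<Longrightarrow> A i \<in> sets (?N i)"
    have "?f -` PiE I A \<inter> space (PiM I ?N) = PiE I (\<lambda>i. f i -` A i \<inter> space (?N i))"
      by (auto simp: space_PiM restrict_PiE_iff PiE_iff)
    then have "emeasure (distr (PiM I ?N) (PiM I ?N) ?f) (PiE I A)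
        = (\<Prod>i\<in>I. emeasure (?N i) (f i -` A i \<inter> space (?N i)))"
      using A f_meas' meas \<open>finite I\<close> by (simp add: emeasure_distr sets_PiM_I_finite emeasure_PiM)
    also have "\<dots> = (\<Prod>i\<in>I. emeasure (distr (?N i) (?N i) (f i)) (A i))"
      using A f_meas' by (intro prod.cong emeasure_distr[symmetric]) auto
    also have "\<dots> = (\<Prod>i\<in>I. emeasure (?N i) (A i))"
      using f_distr by (intro prod.cong) auto
    finally show "emeasure (distr (PiM I ?N) (PiM I ?N) ?f) (PiE I A) = (\<Prod>i\<in>I. emeasure (?N i) (A i))" .
  qed (rule sets_distr)
  then show ?thesis
    unfolding PiM_eq .
qed

lemma PiM_left_translation_measurable:
  assumes "\<And>i. i \<in> I \<Longrightarrow> left_haar_measure (G i) (T i) (\<mu> i)"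
    and "\<And>i. i \<in> I \<Longrightarrow> h i \<in> carrier (G i)"
  shows "(\<lambda>x. restrict (\<lambda>i. h i \<otimes>\<^bsub>G i\<^esub> x i) I) \<in> PiM I \<mu> \<rightarrow>\<^sub>M PiM I \<mu>"
  using assms
  by (intro measurable_restrict measurable_compose[OF measurable_component_singleton]
      left_haar_measure_translation_measurable) auto

lemma PiM_left_translation_invariant:
  assumes "finite I" and "\<And>i. i \<in> I \<Longrightarrow> left_haar_measure (G i) (T i) (\<mu> i)"
    and "\<And>i. i \<in> I \<Longrightarrow> h i \<in> carrier (G i)"
  shows "distr (PiM I \<mu>) (PiM I \<mu>) (\<lambda>x. restrict (\<lambda>i. h i \<otimes>\<^bsub>G i\<^esub> x i) I) = PiM I \<mu>"
  using assms
  by (intro distr_PiM_restrict_measure_preserving left_haar_measure_finite_measure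
      left_haar_measure_translation_measurable left_haar_measure_distr_translation)

lemma powr_above_tangent:
  fixes a t p :: real
  assumes "0 \<le> a" "0 \<le> t" "1 \<le> p"
  shows "a powr p + p * a powr (p - 1) * (t - a) \<le> t powr p"
proof -
  consider "a = 0" | "0 < a" "t = 0" | "0 < a" "0 < t"
    using assms by linarith
  then show ?thesis
  proof cases
    case 2
    then have "a powr p + p * a powr (p - 1) * (t - a) = a powr p * (1 - p)"
      by (simp add: powr_diff algebra_simps)
    also have "\<dots> \<le> 0"
      using assms by (simp add: mult_nonneg_nonpos)
    finally show ?thesis using 2 by simp
  next
    case 3
    then have "p * a powr (p - 1) * (t - a) \<le> t powr p - a powr p"
      using assms
      by (intro convex_on_imp_above_tangent[where A = "{0<..}"] powr_convex)
        (auto intro!: derivative_eq_intros simp: interior_open)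
    then show ?thesis by simp
  qed simp
qed

lemma powr_abs_set_integral_le:
  fixes f :: "'a \<Rightarrow> real"
  assumes "finite_measure \<nu>" and S: "S \<in> sets \<nu>" and pos: "0 < measure \<nu> S" and p: "1 \<le> p"
    and f_int: "integrable \<nu> (\<lambda>x. f x * indicator S x)"
    and h_int: "integrable \<nu> (\<lambda>x. \<bar>f x\<bar> powr p * indicator S x)"
  shows "\<bar>\<integral>x. f x * indicator S x \<partial>\<nu>\<bar> powr p
    \<le> measure \<nu> S powr (p - 1) * (\<integral>x. \<bar>f x\<bar> powr p * indicator S x \<partial>\<nu>)"
proof -
  interpret finite_measure \<nu> by fact
  define c where "c = measure \<nu> S"
  define a where "a = (\<integral>x. \<bar>f x\<bar> * indicator S x \<partial>\<nu>) / c"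
  have S_int: "integrable \<nu> (indicator S :: 'a \<Rightarrow> real)"
    using S by (simp add: emeasure_eq_measure)
  have g_int: "integrable \<nu> (\<lambda>x. \<bar>f x\<bar> * indicator S x)"
    using integrable_abs[OF f_int] by (simp add: abs_mult)
  have a: "0 \<le> a" "(\<integral>x. \<bar>f x\<bar> * indicator S x \<partial>\<nu>) = c * a"
    using pos by (auto simp: a_def c_def intro!: divide_nonneg_pos integral_nonneg_AE)
  let ?k = "a powr p - p * a powr (p - 1) * a" and ?l = "p * a powr (p - 1)"
  \<comment> \<open>Jensen's inequality, obtained by integrating the tangent of \<open>t powr p\<close> at the mean \<open>a\<close>\<close>
  have "c * a powr p = ?k * c + ?l * (c * a)"
    by (simp add: algebra_simps)
  also have "\<dots> = (\<integral>x. ?k * indicator S x + ?l * (\<bar>f x\<bar> * indicator S x) \<partial>\<nu>)"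
    using S_int g_int a S by (simp add: c_def)
  also have "\<dots> \<le> (\<integral>x. \<bar>f x\<bar> powr p * indicator S x \<partial>\<nu>)"
    using S_int g_int h_int powr_above_tangent[OF a(1) abs_ge_zero p]
    by (intro integral_mono Bochner_Integration.integrable_add integrable_mult_right)
      (auto simp: algebra_simps split: split_indicator)
  finally have mean: "c * a powr p \<le> (\<integral>x. \<bar>f x\<bar> powr p * indicator S x \<partial>\<nu>)" .
  have "\<bar>\<integral>x. f x * indicator S x \<partial>\<nu>\<bar> powr p \<le> (c * a) powr p"
    using integral_abs_bound[of \<nu> "\<lambda>x. f x * indicator S x"] a p
    by (intro powr_mono2) (auto simp: abs_mult)
  also have "\<dots> = c powr (p - 1) * (c * a powr p)"
    using pos a by (simp add: c_def powr_mult powr_diff)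
  also have "\<dots> \<le> c powr (p - 1) * (\<integral>x. \<bar>f x\<bar> powr p * indicator S x \<partial>\<nu>)"
    using mean by (intro mult_left_mono) auto
  finally show ?thesis unfolding c_def .
qed

lemma powr_abs_set_integral_le_nn_integral:
  fixes f :: "'a \<Rightarrow> real"
  assumes fin: "finite_measure \<nu>" and S: "S \<in> sets \<nu>" and f: "f \<in> borel_measurable \<nu>" and p: "1 \<le> p"
  shows "ennreal (\<bar>\<integral>x. f x * indicator S x \<partial>\<nu>\<bar> powr p)
    \<le> ennreal (measure \<nu> S powr (p - 1)) * (\<integral>\<^sup>+x. ennreal (\<bar>f x\<bar> powr p * indicator S x) \<partial>\<nu>)"
proof -
  interpret finite_measure \<nu> by fact
  let ?h = "\<lambda>x. \<bar>f x\<bar> powr p * indicator S x"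
  have h_meas: "?h \<in> borel_measurable \<nu>"
    using f S by measurable
  consider "measure \<nu> S = 0" | "\<not> integrable \<nu> (\<lambda>x. f x * indicator S x)"
    | "0 < measure \<nu> S" "\<not> integrable \<nu> ?h"
    | "0 < measure \<nu> S" "integrable \<nu> (\<lambda>x. f x * indicator S x)" "integrable \<nu> ?h"
    using measure_nonneg[of \<nu> S] by linarith
  then show ?thesis
  proof cases
    case 1
    then have "AE x in \<nu>. x \<notin> S"
      using S by (intro AE_not_in) (simp add: emeasure_eq_measure null_sets_def)
    then have "(\<integral>x. f x * indicator S x \<partial>\<nu>) = 0"
      by (intro integral_eq_zero_AE) (auto elim: eventually_mono)
    then show ?thesis using p by simp
  next
    case 2
    then show ?thesis using p by (simp add: not_integrable_integral_eq)
  next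
    case 3
    then have "(\<integral>\<^sup>+x. ennreal (?h x) \<partial>\<nu>) = \<infinity>"
      using h_meas by (auto intro: integrableI_nonneg simp: top.not_eq_extremum)
    then show ?thesis using 3 by (simp add: ennreal_mult_top)
  next
    case 4
    then show ?thesis
      using powr_abs_set_integral_le[OF fin S 4(1) p 4(2,3)]
      by (simp add: nn_integral_eq_integral ennreal_mult[symmetric] integral_nonneg_AE ennreal_leI)
  qed
qed

lemma powr_inverse_le_iff:
  fixes e r p :: real
  assumes "0 \<le> e" "0 \<le> r" "0 < p"
  shows "e powr (1 / p) \<le> r \<longleftrightarrow> e \<le> r powr p"
proof
  assume "e powr (1 / p) \<le> r"
  then have "(e powr (1 / p)) powr p \<le> r powr p"
    using assms by (intro powr_mono2) auto
  then show "e \<le> r powr p"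
    using assms by (simp add: powr_powr)
next
  assume "e \<le> r powr p"
  then have "e powr (1 / p) \<le> (r powr p) powr (1 / p)"
    using assms by (intro powr_mono2) auto
  then show "e powr (1 / p) \<le> r"
    using assms by (simp add: powr_powr)
qed

lemma lp_norm_le_ennreal_iff:
  assumes "0 \<le> r" "0 < p"
  shows "lp_norm M p X \<le> ennreal r \<longleftrightarrow> (\<integral>\<^sup>+\<omega>. ennreal (\<bar>X \<omega>\<bar> powr p) \<partial>M) \<le> ennreal (r powr p)"
proof (cases "(\<integral>\<^sup>+\<omega>. ennreal (\<bar>X \<omega>\<bar> powr p) \<partial>M)")
  case (real e)
  then show ?thesis
    using assms powr_inverse_le_iff[of e r p] by (simp add: lp_norm_def ennreal_le_iff)
qed (simp add: lp_norm_def top_unique)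

lemma nn_integral_powr_abs_set_integral_le:
  fixes F :: "'w \<Rightarrow> 'a \<Rightarrow> real"
  assumes "sigma_finite_measure M" and fin: "finite_measure \<nu>" and S: "S \<in> sets \<nu>"
    and F: "(\<lambda>(\<omega>, x). F \<omega> x) \<in> borel_measurable (M \<Otimes>\<^sub>M \<nu>)" and p: "1 \<le> p"
    and H: "AE \<omega> in M. H \<omega> = (\<integral>x. F \<omega> x * indicator S x \<partial>\<nu>)"
  shows "(\<integral>\<^sup>+\<omega>. ennreal (\<bar>H \<omega>\<bar> powr p) \<partial>M)
    \<le> ennreal (measure \<nu> S powr (p - 1)) * (\<integral>\<^sup>+x. (\<integral>\<^sup>+\<omega>. ennreal (\<bar>F \<omega> x\<bar> powr p) \<partial>M) * indicator S x \<partial>\<nu>)"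
proof -
  interpret pair_sigma_finite M \<nu>
    using assms(1) fin by (simp add: pair_sigma_finite_def finite_measure.sigma_finite_measure)
  let ?c = "ennreal (measure \<nu> S powr (p - 1))"
  let ?G = "\<lambda>\<omega> x. ennreal (\<bar>F \<omega> x\<bar> powr p * indicator S x)"
  have G_meas: "(\<lambda>(\<omega>, x). ?G \<omega> x) \<in> borel_measurable (M \<Otimes>\<^sub>M \<nu>)"
    using F S by measurable
  have "(\<integral>\<^sup>+\<omega>. ennreal (\<bar>H \<omega>\<bar> powr p) \<partial>M) \<le> (\<integral>\<^sup>+\<omega>. ?c * (\<integral>\<^sup>+x. ?G \<omega> x \<partial>\<nu>) \<partial>M)"
  proof (rule nn_integral_mono_AE)
    show "AE \<omega> in M. ennreal (\<bar>H \<omega>\<bar> powr p) \<le> ?c * (\<integral>\<^sup>+x. ?G \<omega> x \<partial>\<nu>)"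
      using H
    proof (rule AE_mp, intro AE_I2 impI)
      fix \<omega> assume "\<omega> \<in> space M" and "H \<omega> = (\<integral>x. F \<omega> x * indicator S x \<partial>\<nu>)"
      then show "ennreal (\<bar>H \<omega>\<bar> powr p) \<le> ?c * (\<integral>\<^sup>+x. ?G \<omega> x \<partial>\<nu>)"
        using powr_abs_set_integral_le_nn_integral[OF fin S _ p] measurable_Pair2[OF F] by simp
    qed
  qed
  also have "\<dots> = ?c * (\<integral>\<^sup>+\<omega>. (\<integral>\<^sup>+x. ?G \<omega> x \<partial>\<nu>) \<partial>M)"
    using G_meas by (intro nn_integral_cmult M2.borel_measurable_nn_integral)
  also have "(\<integral>\<^sup>+\<omega>. (\<integral>\<^sup>+x. ?G \<omega> x \<partial>\<nu>) \<partial>M) = (\<integral>\<^sup>+x. (\<integral>\<^sup>+\<omega>. ?G \<omega> x \<partial>M) \<partial>\<nu>)"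
    using G_meas by (rule Fubini'[symmetric])
  also have "\<dots> = (\<integral>\<^sup>+x. (\<integral>\<^sup>+\<omega>. ennreal (\<bar>F \<omega> x\<bar> powr p) \<partial>M) * indicator S x \<partial>\<nu>)"
    by (intro nn_integral_cong) (simp split: split_indicator)
  finally show ?thesis .
qed

lemma lp_norm_set_integral_le:
  fixes F :: "'w \<Rightarrow> 'a \<Rightarrow> real"
  assumes M: "sigma_finite_measure M" and fin: "finite_measure \<nu>" and S: "S \<in> sets \<nu>"
    and F: "(\<lambda>(\<omega>, x). F \<omega> x) \<in> borel_measurable (M \<Otimes>\<^sub>M \<nu>)" and p: "1 \<le> p"
    and H: "AE \<omega> in M. H \<omega> = (\<integral>x. F \<omega> x * indicator S x \<partial>\<nu>)"
  shows "lp_norm M p H \<le> (SUP x\<in>S. lp_norm M p (\<lambda>\<omega>. F \<omega> x)) * emeasure \<nu> S"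
proof -
  interpret finite_measure \<nu> by fact
  define K where "K = measure \<nu> S"
  define s where "s = (SUP x\<in>S. lp_norm M p (\<lambda>\<omega>. F \<omega> x))"
  note bound = nn_integral_powr_abs_set_integral_le[OF M fin S F p H, folded K_def]
  have K: "0 \<le> K" "emeasure \<nu> S = ennreal K"
    by (auto simp: K_def emeasure_eq_measure)
  consider "K = 0" | "0 < K" "s = \<infinity>" | r where "0 < K" "s = ennreal r" "0 \<le> r"
    using K(1) by (cases s) force+
  then have "lp_norm M p H \<le> s * ennreal K"
  proof cases
    case 1
    then have "lp_norm M p H \<le> ennreal 0"
      using bound p by (subst lp_norm_le_ennreal_iff) auto
    then show ?thesis by simp
  next
    case 2
    then show ?thesis by (simp add: ennreal_top_mult)
  next
    case 3
    have "(\<integral>\<^sup>+\<omega>. ennreal (\<bar>F \<omega> x\<bar> powr p) \<partial>M) \<le> ennreal (r powr p)" if "x \<in> S" for x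
    proof -
      have "lp_norm M p (\<lambda>\<omega>. F \<omega> x) \<le> ennreal r"
        using that 3(2) unfolding s_def by (metis SUP_upper)
      then show ?thesis
        using 3(3) p by (subst (asm) lp_norm_le_ennreal_iff) auto
    qed
    then have "(\<integral>\<^sup>+x. (\<integral>\<^sup>+\<omega>. ennreal (\<bar>F \<omega> x\<bar> powr p) \<partial>M) * indicator S x \<partial>\<nu>)
        \<le> (\<integral>\<^sup>+x. ennreal (r powr p) * indicator S x \<partial>\<nu>)"
      by (intro nn_integral_mono) (simp split: split_indicator)
    also have "\<dots> = ennreal (r powr p) * ennreal K"
      using S K by (simp add: nn_integral_cmult_indicator)
    finally have "(\<integral>\<^sup>+\<omega>. ennreal (\<bar>H \<omega>\<bar> powr p) \<partial>M)
        \<le> ennreal (K powr (p - 1)) * (ennreal (r powr p) * ennreal K)"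
      using bound by (meson mult_left_mono order_trans zero_le)
    also have "\<dots> = ennreal ((r * K) powr p)"
      using 3(1,3) p by (simp add: ennreal_mult[symmetric] powr_mult powr_diff)
    finally have "lp_norm M p H \<le> ennreal (r * K)"
      using 3(1,3) p by (subst lp_norm_le_ennreal_iff) auto
    then show ?thesis
      using 3 by (simp add: ennreal_mult)
  qed
  then show ?thesis
    by (simp add: s_def K)
qed

lemma prod_indicator_PiE:
  assumes "finite I" "x \<in> extensional I"
  shows "(\<Prod>i\<in>I. indicator (A i) (x i)) = (indicator (PiE I A) x :: real)"
  using assms by (auto simp: indicator_def PiE_iff prod.neutral)

lemma localized_vanishes_outside:
  fixes f :: "'g \<Rightarrow> 'v::real_vector"
  assumes "group G" and h: "h \<in> carrier G" and x: "x \<in> carrier G" "x \<notin> X"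
    and localized: "\<And>y. y \<in> carrier G \<Longrightarrow> f y = indicator X (h \<otimes>\<^bsub>G\<^esub> y) *\<^sub>R f y"
  shows "f (inv\<^bsub>G\<^esub> h \<otimes>\<^bsub>G\<^esub> x) = 0"
proof -
  interpret group G by fact
  let ?y = "inv\<^bsub>G\<^esub> h \<otimes>\<^bsub>G\<^esub> x"
  have "f ?y = indicator X (h \<otimes>\<^bsub>G\<^esub> ?y) *\<^sub>R f ?y"
    using h x by (intro localized) simp
  also have "h \<otimes>\<^bsub>G\<^esub> ?y = x"
    using h x by (simp add: m_assoc[symmetric])
  finally show ?thesis
    using x(2) by (metis indicator_simps(2) scaleR_zero_left)
qed

locale localized_chaos_sum =
  fixes M :: "'w measure"
    and m n :: nat
    and q :: "nat \<Rightarrow> nat"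
    and I :: "nat \<Rightarrow> 'v::real_vector \<Rightarrow> 'w \<Rightarrow> real"
    and G :: "nat \<Rightarrow> 'g monoid"
    and T :: "nat \<Rightarrow> 'g topology"
    and \<mu> :: "nat \<Rightarrow> 'g measure"
    and e :: "nat \<Rightarrow> nat \<Rightarrow> nat \<Rightarrow> 'g \<Rightarrow> 'v"
    and A :: "nat \<Rightarrow> (nat \<Rightarrow> nat) \<Rightarrow> (nat \<Rightarrow> 'g) \<Rightarrow> 'w \<Rightarrow> real"
    and g :: "nat \<Rightarrow> nat \<Rightarrow> nat \<Rightarrow> 'g"
    and chi :: "nat \<Rightarrow> nat \<Rightarrow> 'g set"
    and Hring :: "(nat \<Rightarrow> 'g) \<Rightarrow> 'w \<Rightarrow> real"
    and HH :: "'w \<Rightarrow> real"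
  assumes I_linear: "\<And>k a b u v \<omega>. I k (a *\<^sub>R u + b *\<^sub>R v) \<omega> = a * I k u \<omega> + b * I k v \<omega>"
    and haar: "\<And>i. i < m \<Longrightarrow> left_haar_measure (G i) (T i) (\<mu> i)"
    and A_meas: "\<And>js. js \<in> PiE {..<m} (\<lambda>_. {1..n}) \<Longrightarrow>
        (\<lambda>(\<omega>, x). A n js x \<omega>) \<in> borel_measurable (M \<Otimes>\<^sub>M PiM {..<m} \<mu>)"
    and I_meas: "\<And>i j. i < m \<Longrightarrow> j \<in> {1..n} \<Longrightarrow>
        (\<lambda>(\<omega>, x). I (q i) (e i n j x) \<omega>) \<in> borel_measurable (M \<Otimes>\<^sub>M \<mu> i)"
    and summand_integrable: "\<And>js. js \<in> PiE {..<m} (\<lambda>_. {1..n}) \<Longrightarrow>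
        AE \<omega> in M. integrable (PiM {..<m} \<mu>)
          (\<lambda>x. A n js x \<omega> * (\<Prod>i<m. I (q i) (e i n (js i) (x i)) \<omega>))"
    and HH_def: "\<And>\<omega>. HH \<omega> = (\<integral>x. (\<Sum>js\<in>PiE {..<m} (\<lambda>_. {1..n}).
          A n js x \<omega> * (\<Prod>i<m. I (q i) (e i n (js i) (x i)) \<omega>)) \<partial>PiM {..<m} \<mu>)"
    and g_in: "\<And>i j. i < m \<Longrightarrow> j \<in> {1..n} \<Longrightarrow> g i n j \<in> carrier (G i)"
    and chi_meas: "\<And>i. i < m \<Longrightarrow> chi i n \<in> sets (\<mu> i)"
    and localization: "\<And>i j x. i < m \<Longrightarrow> j \<in> {1..n} \<Longrightarrow> x \<in> carrier (G i) \<Longrightarrow>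
        e i n j x = indicator (chi i n) (g i n j \<otimes>\<^bsub>G i\<^esub> x) *\<^sub>R e i n j x"
    and Hring_def: "\<And>x \<omega>. Hring x \<omega> = (\<Sum>js\<in>PiE {..<m} (\<lambda>_. {1..n}).
          A n js (restrict (\<lambda>i. inv\<^bsub>G i\<^esub> (g i n (js i)) \<otimes>\<^bsub>G i\<^esub> x i) {..<m}) \<omega> *
          (\<Prod>i<m. I (q i) (e i n (js i) (inv\<^bsub>G i\<^esub> (g i n (js i)) \<otimes>\<^bsub>G i\<^esub> x i)) \<omega>))"
begin

abbreviation "\<nu> \<equiv> PiM {..<m} \<mu>"

abbreviation "J \<equiv> PiE {..<m} (\<lambda>_. {1..n})"

abbreviation "S \<equiv> PiE {..<m} (\<lambda>i. chi i n)"

definition summand :: "(nat \<Rightarrow> nat) \<Rightarrow> (nat \<Rightarrow> 'g) \<Rightarrow> 'w \<Rightarrow> real" where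
  "summand js x \<omega> = A n js x \<omega> * (\<Prod>i<m. I (q i) (e i n (js i) (x i)) \<omega>)"

definition shift :: "(nat \<Rightarrow> nat) \<Rightarrow> (nat \<Rightarrow> 'g) \<Rightarrow> (nat \<Rightarrow> 'g)" where
  "shift js x = restrict (\<lambda>i. inv\<^bsub>G i\<^esub> (g i n (js i)) \<otimes>\<^bsub>G i\<^esub> x i) {..<m}"

lemma index_in_range: "js \<in> J \<Longrightarrow> i < m \<Longrightarrow> js i \<in> {1..n}"
  using PiE_mem[of js "{..<m}" "\<lambda>_. {1..n}" i] by simp

lemma inv_g_in:
  assumes "js \<in> J" "i < m"
  shows "inv\<^bsub>G i\<^esub> (g i n (js i)) \<in> carrier (G i)"
  using assms by (intro group.inv_closed[OF left_haar_measure_group[OF haar]] g_in index_in_range)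

lemma shift_measurable: "js \<in> J \<Longrightarrow> shift js \<in> \<nu> \<rightarrow>\<^sub>M \<nu>"
  unfolding shift_def using haar inv_g_in by (intro PiM_left_translation_measurable) auto

lemma distr_shift: "js \<in> J \<Longrightarrow> distr \<nu> \<nu> (shift js) = \<nu>"
  unfolding shift_def using haar inv_g_in by (intro PiM_left_translation_invariant) auto

lemma S_in_sets: "S \<in> sets \<nu>"
  using chi_meas by (intro sets_PiM_I_finite) auto

lemma finite_measure_\<nu>: "finite_measure \<nu>"
  using haar by (intro finite_measure_PiM_finite left_haar_measure_finite_measure) auto

lemma summand_comp_measurable:
  assumes js: "js \<in> J" and \<phi>: "\<phi> \<in> \<nu> \<rightarrow>\<^sub>M \<nu>"
  shows "(\<lambda>(\<omega>, x). summand js (\<phi> x) \<omega>) \<in> borel_measurable (M \<Otimes>\<^sub>M \<nu>)"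
proof -
  have A: "(\<lambda>z. A n js (\<phi> (snd z)) (fst z)) \<in> borel_measurable (M \<Otimes>\<^sub>M \<nu>)"
  proof -
    have "(\<lambda>z. (fst z, \<phi> (snd z))) \<in> M \<Otimes>\<^sub>M \<nu> \<rightarrow>\<^sub>M M \<Otimes>\<^sub>M \<nu>"
      using \<phi> by measurable
    from measurable_compose[OF this A_meas[OF js]] show ?thesis
      by simp
  qed
  have I: "(\<lambda>z. I (q i) (e i n (js i) (\<phi> (snd z) i)) (fst z)) \<in> borel_measurable (M \<Otimes>\<^sub>M \<nu>)"
    if "i < m" for i
  proof -
    have "(\<lambda>z. (fst z, \<phi> (snd z) i)) \<in> M \<Otimes>\<^sub>M \<nu> \<rightarrow>\<^sub>M M \<Otimes>\<^sub>M \<mu> i"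
      using \<phi> by measurable (simp add: that)
    from measurable_compose[OF this I_meas[OF that index_in_range[OF js that]]] show ?thesis
      by simp
  qed
  show ?thesis
    unfolding summand_def case_prod_beta'
    using A I by (intro borel_measurable_times borel_measurable_prod) auto
qed

lemma summand_measurable: "js \<in> J \<Longrightarrow> \<omega> \<in> space M \<Longrightarrow> (\<lambda>x. summand js x \<omega>) \<in> borel_measurable \<nu>"
  using measurable_Pair2[OF summand_comp_measurable[OF _ measurable_ident]] by simp

lemma integrable_shift_iff:
  fixes f :: "(nat \<Rightarrow> 'g) \<Rightarrow> real"
  assumes "js \<in> J" "f \<in> borel_measurable \<nu>"
  shows "integrable \<nu> (\<lambda>x. f (shift js x)) \<longleftrightarrow> integrable \<nu> f"
  using integrable_distr_eq[OF shift_measurable[OF assms(1)] assms(2)] distr_shift[OF assms(1)]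
  by simp

lemma integral_shift:
  fixes f :: "(nat \<Rightarrow> 'g) \<Rightarrow> real"
  assumes "js \<in> J" "f \<in> borel_measurable \<nu>"
  shows "(\<integral>x. f (shift js x) \<partial>\<nu>) = (\<integral>x. f x \<partial>\<nu>)"
  using integral_distr[OF shift_measurable[OF assms(1)] assms(2)] distr_shift[OF assms(1)]
  by simp

lemma Hring_eq_sum_shift: "Hring x \<omega> = (\<Sum>js\<in>J. summand js (shift js x) \<omega>)"
  unfolding Hring_def summand_def shift_def
  by (intro sum.cong refl arg_cong2[where f = "(*)"] prod.cong) auto

lemma Hring_measurable: "(\<lambda>(\<omega>, x). Hring x \<omega>) \<in> borel_measurable (M \<Otimes>\<^sub>M \<nu>)"
  unfolding Hring_eq_sum_shift case_prod_beta'
  using summand_comp_measurable[OF _ shift_measurable, unfolded case_prod_beta']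
  by (intro borel_measurable_sum) auto

lemma Hring_eq_0_outside:
  assumes x: "x \<in> space \<nu>" "x \<notin> S"
  shows "Hring x \<omega> = 0"
proof -
  obtain k where k: "k < m" "x k \<notin> chi k n"
    using x by (auto simp: space_PiM PiE_iff)
  have x_k: "x k \<in> carrier (G k)"
    using x k left_haar_measure_space[OF haar[OF k(1)]] by (auto simp: space_PiM PiE_iff)
  have "e k n (js k) (inv\<^bsub>G k\<^esub> (g k n (js k)) \<otimes>\<^bsub>G k\<^esub> x k) = 0" if "js \<in> J" for js
    using index_in_range[OF that k(1)]
    by (intro localized_vanishes_outside[OF left_haar_measure_group[OF haar] g_in x_k k(2)
        localization] k(1))
  moreover have "I (q k) 0 \<omega> = 0"
    using I_linear[of "q k" 0 0 0 0 \<omega>] by simp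
  ultimately show ?thesis
    unfolding Hring_eq_sum_shift summand_def shift_def
    using k by (intro sum.neutral ballI) (auto intro!: prod_zero bexI[of _ k])
qed

lemma HH_eq_set_integral_Hring: "AE \<omega> in M. HH \<omega> = (\<integral>x. Hring x \<omega> * indicator S x \<partial>\<nu>)"
proof -
  have "AE \<omega> in M. \<forall>js\<in>J. integrable \<nu> (\<lambda>x. summand js x \<omega>)"
    using summand_integrable finite_PiE[of "{..<m}" "\<lambda>_. {1..n}"] unfolding summand_def
    by (intro eventually_ball_finite ballI) auto
  then show ?thesis
  proof (rule AE_mp, intro AE_I2 impI)
    fix \<omega> assume \<omega>: "\<omega> \<in> space M" and int: "\<forall>js\<in>J. integrable \<nu> (\<lambda>x. summand js x \<omega>)"
    have int_shift: "integrable \<nu> (\<lambda>x. summand js (shift js x) \<omega>)" if "js \<in> J" for js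
      using int that integrable_shift_iff[OF that summand_measurable[OF that \<omega>]] by simp
    have "HH \<omega> = (\<Sum>js\<in>J. \<integral>x. summand js x \<omega> \<partial>\<nu>)"
      unfolding HH_def summand_def[symmetric] using int
      by (intro Bochner_Integration.integral_sum) auto
    also have "\<dots> = (\<Sum>js\<in>J. \<integral>x. summand js (shift js x) \<omega> \<partial>\<nu>)"
      using integral_shift[OF _ summand_measurable[OF _ \<omega>]] by (intro sum.cong) auto
    also have "\<dots> = (\<integral>x. Hring x \<omega> \<partial>\<nu>)"
      unfolding Hring_eq_sum_shift using int_shift
      by (intro Bochner_Integration.integral_sum[symmetric]) auto
    also have "\<dots> = (\<integral>x. Hring x \<omega> * indicator S x \<partial>\<nu>)"
      using Hring_eq_0_outside by (intro Bochner_Integration.integral_cong) (auto split: split_indicator)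
    finally show "HH \<omega> = (\<integral>x. Hring x \<omega> * indicator S x \<partial>\<nu>)" .
  qed
qed

end

theorem theorem12p4:
  fixes M :: "'w measure"
    and m n :: nat
    and q :: "nat \<Rightarrow> nat"
    and I :: "nat \<Rightarrow> 'v::real_vector \<Rightarrow> 'w \<Rightarrow> real"
    and G :: "nat \<Rightarrow> 'g monoid"
    and T :: "nat \<Rightarrow> 'g topology"
    and \<mu> :: "nat \<Rightarrow> 'g measure"
    and e :: "nat \<Rightarrow> nat \<Rightarrow> nat \<Rightarrow> 'g \<Rightarrow> 'v"
    and A :: "nat \<Rightarrow> (nat \<Rightarrow> nat) \<Rightarrow> (nat \<Rightarrow> 'g) \<Rightarrow> 'w \<Rightarrow> real"
    and g :: "nat \<Rightarrow> nat \<Rightarrow> nat \<Rightarrow> 'g"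
    and chi :: "nat \<Rightarrow> nat \<Rightarrow> 'g set"
    and H Hring :: "(nat \<Rightarrow> 'g) \<Rightarrow> 'w \<Rightarrow> real"
    and HH :: "'w \<Rightarrow> real"
    and p :: real
  assumes M: "prob_space M"
    and I_linear: "\<And>k a b u v \<omega>. I k (a *\<^sub>R u + b *\<^sub>R v) \<omega> = a * I k u \<omega> + b * I k v \<omega>"
    and haar: "\<And>i. i < m \<Longrightarrow> left_haar_measure (G i) (T i) (\<mu> i)"
    and A_meas: "\<And>js. js \<in> PiE {..<m} (\<lambda>_. {1..n}) \<Longrightarrow>
        (\<lambda>(\<omega>, x). A n js x \<omega>) \<in> borel_measurable (M \<Otimes>\<^sub>M PiM {..<m} \<mu>)"
    and I_meas: "\<And>i j. i < m \<Longrightarrow> j \<in> {1..n} \<Longrightarrow>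
        (\<lambda>(\<omega>, x). I (q i) (e i n j x) \<omega>) \<in> borel_measurable (M \<Otimes>\<^sub>M \<mu> i)"
    and integrable: "\<And>js. js \<in> PiE {..<m} (\<lambda>_. {1..n}) \<Longrightarrow>
        AE \<omega> in M. integrable (PiM {..<m} \<mu>)
          (\<lambda>x. A n js x \<omega> * (\<Prod>i<m. I (q i) (e i n (js i) (x i)) \<omega>))"
    and HH_def: "\<And>\<omega>. HH \<omega> = (\<integral>x. (\<Sum>js\<in>PiE {..<m} (\<lambda>_. {1..n}).
          A n js x \<omega> * (\<Prod>i<m. I (q i) (e i n (js i) (x i)) \<omega>)) \<partial>PiM {..<m} \<mu>)"
    and g_in: "\<And>i j. i < m \<Longrightarrow> j \<in> {1..n} \<Longrightarrow> g i n j \<in> carrier (G i)"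
    and chi_meas: "\<And>i. i < m \<Longrightarrow> chi i n \<in> sets (\<mu> i)"
    and localization: "\<And>i j x. i < m \<Longrightarrow> j \<in> {1..n} \<Longrightarrow> x \<in> carrier (G i) \<Longrightarrow>
        e i n j x = indicator (chi i n) (g i n j \<otimes>\<^bsub>G i\<^esub> x) *\<^sub>R e i n j x"
    and Hring_def: "\<And>x \<omega>. Hring x \<omega> = (\<Sum>js\<in>PiE {..<m} (\<lambda>_. {1..n}).
          A n js (restrict (\<lambda>i. inv\<^bsub>G i\<^esub> (g i n (js i)) \<otimes>\<^bsub>G i\<^esub> x i) {..<m}) \<omega> *
          (\<Prod>i<m. I (q i) (e i n (js i) (inv\<^bsub>G i\<^esub> (g i n (js i)) \<otimes>\<^bsub>G i\<^esub> x i)) \<omega>))"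
    and p: "1 \<le> p"
  shows "(AE \<omega> in M. HH \<omega> =
            (\<integral>x. Hring x \<omega> * (\<Prod>i<m. indicator (chi i n) (x i)) \<partial>PiM {..<m} \<mu>))
       \<and> lp_norm M p HH \<le>
            (SUP x\<in>space (PiM {..<m} \<mu>). lp_norm M p (Hring x)) *
            emeasure (PiM {..<m} \<mu>) (PiE {..<m} (\<lambda>i. chi i n))"
proof -
  interpret localized_chaos_sum M m n q I G T \<mu> e A g chi Hring HH
    using I_linear haar A_meas I_meas integrable HH_def g_in chi_meas localization Hring_def
    by (rule localized_chaos_sum.intro)
  have indicator_S: "(\<Prod>i<m. indicator (chi i n) (x i)) = (indicator S x :: real)"
    if "x \<in> space \<nu>" for x
    using that by (intro prod_indicator_PiE) (auto simp: space_PiM PiE_iff)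
  have HH_eq: "AE \<omega> in M. HH \<omega> = (\<integral>x. Hring x \<omega> * (\<Prod>i<m. indicator (chi i n) (x i)) \<partial>\<nu>)"
    using HH_eq_set_integral_Hring
    by (rule eventually_mono) (simp add: indicator_S cong: Bochner_Integration.integral_cong)
  have "lp_norm M p HH \<le> (SUP x\<in>S. lp_norm M p (Hring x)) * emeasure \<nu> S"
    using lp_norm_set_integral_le[where F = "\<lambda>\<omega> x. Hring x \<omega>", OF prob_space_imp_sigma_finite[OF M]
        finite_measure_\<nu> S_in_sets Hring_measurable p HH_eq_set_integral_Hring] by simp
  also have "\<dots> \<le> (SUP x\<in>space \<nu>. lp_norm M p (Hring x)) * emeasure \<nu> S"
    using sets.sets_into_space[OF S_in_sets] by (intro mult_right_mono SUP_subset_mono) auto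
  finally show ?thesis
    using HH_eq by (intro conjI)
qed

end
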